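(* Let $p>3$ be a prime, and set $A_p=\left(\tfrac{p-1}{2}\right)!!\prod_{i,j=1,\ p\nmid 2i+j}^{(p-1)/2}(2i+j)$ and $B_p=\left(\tfrac{p-3}{2}\right)!!\prod_{i,j=1,\ p\nmid 2i-j}^{(p-1)/2}(2i-j)$. Then $A_pB_p\equiv\left(\frac{-2}{p}\right)\pmod p$.
   Context: For a positive integer $n$, $n!!=\prod_{k=0}^{\lfloor(n-1)/2\rfloor}(n-2k)$, and $0!!=1$. $\left(\frac{\cdot}{p}\right)$ denotes the Legendre symbol. *)

theory Defs
  imports "HOL-Number_Theory.Number_Theory"
begin

definition dfact :: "nat \<Rightarrow> nat" where
  "dfact n = (if n = 0 then 1 else (\<Prod>k\<in>{0..(n - 1) div 2}. n - 2 * k))"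

end

theory Submission
  imports Defs
begin

text \<open>Write \<open>p = 2n + 1\<close>. For each \<open>1 \<le> i \<le> n\<close> the numbers \<open>2i\<close> and \<open>2i \<plusminus> j\<close>
  (\<open>1 \<le> j \<le> n\<close>) fill the window \<open>[2i - n, 2i + n]\<close> of \<open>p\<close> consecutive integers, a complete
  residue system, so by Wilson's theorem the product of its members prime to \<open>p\<close> is \<open>\<equiv> -1\<close>.
  Multiplying over \<open>i\<close> and using \<open>n!! (n-1)!! = n!\<close> gives \<open>2\<^sup>n A\<^sub>p B\<^sub>p \<equiv> (-1)\<^sup>n\<close>, i.e.
  \<open>(-2)\<^sup>n A\<^sub>p B\<^sub>p \<equiv> 1\<close>, and Euler's criterion identifies \<open>(-2)\<^sup>n\<close> with \<open>(-2/p)\<close>.\<close>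

lemma dfact_Suc_Suc: "dfact (Suc (Suc m)) = (m + 2) * dfact m"
proof (cases m)
  case 0
  then show ?thesis by (simp add: dfact_def)
next
  case (Suc k)
  then have "(Suc (Suc m) - 1) div 2 = Suc ((m - 1) div 2)" by simp
  then have "dfact (Suc (Suc m)) = (\<Prod>k\<in>{0..Suc ((m - 1) div 2)}. Suc (Suc m) - 2 * k)"
    by (simp add: dfact_def)
  also have "\<dots> = (m + 2) * (\<Prod>k\<in>{0..(m - 1) div 2}. m - 2 * k)"
    by (subst prod.atLeast0_atMost_Suc_shift) simp
  finally show ?thesis using Suc by (simp add: dfact_def)
qed

lemma dfact_Suc_mult_dfact: "dfact (Suc m) * dfact m = fact (Suc m)"
proof (induction m)
  case 0
  then show ?case by (simp add: dfact_def)
next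
  case (Suc m)
  have "dfact (Suc (Suc m)) * dfact (Suc m) = (m + 2) * (dfact (Suc m) * dfact m)"
    by (simp add: dfact_Suc_Suc algebra_simps)
  also have "\<dots> = fact (Suc (Suc m))" using Suc by simp
  finally show ?case .
qed

lemma prod_pairs_filter_eq_nested:
  assumes "finite I" "finite J"
  shows "(\<Prod>(i, j) \<in> {(i, j). i \<in> I \<and> j \<in> J \<and> P i j}. g i j)
       = (\<Prod>i\<in>I. \<Prod>j\<in>J. if P i j then g i j else 1)"
proof -
  have "{(i, j). i \<in> I \<and> j \<in> J \<and> P i j} = Sigma I (\<lambda>i. {j \<in> J. P i j})" by auto
  then show ?thesis using assms by (simp add: prod.Sigma[symmetric] prod.inter_filter)
qed

lemma prod_atLeastAtMost_centered:
  fixes g :: "int \<Rightarrow> 'a::comm_monoid_mult"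
  shows "(\<Prod>x\<in>{a - int n..a + int n}. g x) = g a * (\<Prod>j\<in>{1..int n}. g (a + j) * g (a - j))"
proof (induction n)
  case 0
  then show ?case by simp
next
  case (Suc n)
  have "{a - int (Suc n)..a + int (Suc n)}
      = insert (a - int n - 1) (insert (a + int n + 1) {a - int n..a + int n})"
    and "{1..int (Suc n)} = insert (int n + 1) {1..int n}" by auto
  then show ?case using Suc by (simp add: algebra_simps)
qed

lemma prod_int_atLeastAtMost_eq_fact: "(\<Prod>i\<in>{1..int n}. i) = int (fact n)"
proof -
  have "(\<Prod>i\<in>{1..int n}. i) = (\<Prod>k\<in>{1..n}. int k)"
    using prod.reindex[of int "{1..n}" "\<lambda>i. i"] by (simp add: image_int_atLeastAtMost)
  then show ?thesis by (simp add: fact_prod)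
qed

lemma bij_betw_mod_atLeastLessThan:
  fixes m :: int
  assumes "m > 0"
  shows "bij_betw (\<lambda>x. x mod m) {a..<a + m} {0..<m}"
proof (rule bij_betwI[where g = "\<lambda>y. a + (y - a) mod m"])
  show "(\<lambda>x. x mod m) \<in> {a..<a + m} \<rightarrow> {0..<m}"
    and "(\<lambda>y. a + (y - a) mod m) \<in> {0..<m} \<rightarrow> {a..<a + m}" using assms by auto
  show "a + (x mod m - a) mod m = x" if "x \<in> {a..<a + m}" for x
  proof -
    have "(x mod m - a) mod m = (x - a) mod m" by (simp add: mod_diff_left_eq)
    also have "\<dots> = x - a" using that by simp
    finally show ?thesis by simp
  qed
  show "(a + (y - a) mod m) mod m = y" if "y \<in> {0..<m}" for y
    using that by (simp add: mod_add_right_eq)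
qed

definition omit_multiple :: "int \<Rightarrow> int \<Rightarrow> int" where
  "omit_multiple m x = (if m dvd x then 1 else x)"

lemma omit_multiple_cong_mod: "[omit_multiple m x = omit_multiple m (x mod m)] (mod m)"
  by (auto simp: omit_multiple_def cong_def dvd_eq_mod_eq_0)

text \<open>The window is a complete residue system, so this is Wilson's theorem.\<close>

lemma prod_omit_multiple_window_cong:
  assumes "prime p"
  shows "[(\<Prod>x\<in>{a..<a + int p}. omit_multiple (int p) x) = -1] (mod int p)"
proof -
  have p_pos: "int p > 0" using assms prime_gt_0_nat by simp
  have "[(\<Prod>x\<in>{a..<a + int p}. omit_multiple (int p) x)
       = (\<Prod>x\<in>{a..<a + int p}. omit_multiple (int p) (x mod int p))] (mod int p)"
    by (intro cong_prod omit_multiple_cong_mod)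
  also have "(\<Prod>x\<in>{a..<a + int p}. omit_multiple (int p) (x mod int p))
           = (\<Prod>y\<in>{0..<int p}. omit_multiple (int p) y)"
    using prod.reindex_bij_betw[OF bij_betw_mod_atLeastLessThan[OF p_pos]] by simp
  also have "{0..<int p} = insert 0 {1..int (p - 1)}" using p_pos by auto
  also have "(\<Prod>y\<in>insert 0 {1..int (p - 1)}. omit_multiple (int p) y) = (\<Prod>y\<in>{1..int (p - 1)}. y)"
    using p_pos by (auto simp: omit_multiple_def zdvd_not_zless intro!: prod.cong)
  also have "\<dots> = fact (p - 1)"
    by (simp add: prod_int_atLeastAtMost_eq_fact)
  also have "[fact (p - 1) = (-1 :: int)] (mod int p)"
    using wilson_theorem[OF assms] by (simp add: of_nat_fact)
  finally show ?thesis .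
qed

lemma prod_omit_multiple_centered_window_cong:
  assumes "prime p" "p = 2 * n + 1" "\<not> int p dvd a"
  shows "[a * (\<Prod>j\<in>{1..int n}. omit_multiple (int p) (a + j) * omit_multiple (int p) (a - j))
          = -1] (mod int p)"
proof -
  have "{a - int n..<a - int n + int p} = {a - int n..a + int n}" using assms(2) by auto
  moreover have "omit_multiple (int p) a = a" using assms(3) by (simp add: omit_multiple_def)
  ultimately show ?thesis
    using prod_omit_multiple_window_cong[OF assms(1), of "a - int n"]
    by (simp add: prod_atLeastAtMost_centered)
qed

lemma Legendre_cong_if_power_mult_cong_1:
  fixes p :: nat and a x :: int
  assumes "prime p" "p > 2" "\<not> int p dvd a"
    and "[a ^ ((p - 1) div 2) * x = 1] (mod int p)"
  shows "[x = Legendre a (int p)] (mod int p)"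
proof -
  define L where "L = Legendre a (int p)"
  have "L * L = 1" using assms(3) by (simp add: L_def Legendre_def cong_0_iff)
  have "[L * x = a ^ ((p - 1) div 2) * x] (mod int p)"
    using euler_criterion[OF assms(1,2)] by (simp add: L_def cong_mult)
  then have "[L * x = 1] (mod int p)" using assms(4) by (rule cong_trans)
  then have "[L * (L * x) = L] (mod int p)" using cong_scalar_left by fastforce
  with \<open>L * L = 1\<close> show ?thesis by (simp add: L_def mult.assoc[symmetric])
qed

theorem mainTheorem11:
  fixes p :: nat
  assumes "prime p" and "p > 3"
  defines "A \<equiv> int (dfact ((p - 1) div 2)) *
      (\<Prod>(i, j) \<in> {(i, j). i \<in> {1..int ((p - 1) div 2)} \<and> j \<in> {1..int ((p - 1) div 2)}
                         \<and> \<not> int p dvd (2 * i + j)}. 2 * i + j)"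
      and "B \<equiv> int (dfact ((p - 3) div 2)) *
      (\<Prod>(i, j) \<in> {(i, j). i \<in> {1..int ((p - 1) div 2)} \<and> j \<in> {1..int ((p - 1) div 2)}
                         \<and> \<not> int p dvd (2 * i - j)}. 2 * i - j)"
  shows "[A * B = Legendre (-2) (int p)] (mod int p)"
proof -
  define n where "n = (p - 1) div 2"
  define I where "I = {1..int n}"
  define f where "f = omit_multiple (int p)"
  have "odd p" using assms(1,2) prime_odd_nat by simp
  then have p_eq: "p = 2 * n + 1" unfolding n_def by presburger
  have A_eq: "A = int (dfact n) * (\<Prod>i\<in>I. \<Prod>j\<in>I. f (2 * i + j))"
    unfolding A_def n_def[symmetric] I_def[symmetric]
    by (subst prod_pairs_filter_eq_nested) (simp_all add: I_def f_def omit_multiple_def if_conn(4))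
  have "(p - 3) div 2 = n - 1" using p_eq by simp
  have B_eq: "B = int (dfact (n - 1)) * (\<Prod>i\<in>I. \<Prod>j\<in>I. f (2 * i - j))"
    unfolding B_def \<open>(p - 3) div 2 = n - 1\<close> n_def[symmetric] I_def[symmetric]
    by (subst prod_pairs_filter_eq_nested) (simp_all add: I_def f_def omit_multiple_def if_conn(4))
  have "int (dfact n) * int (dfact (n - 1)) = int (fact n)"
    using dfact_Suc_mult_dfact[of "n - 1"] assms(2) p_eq by (simp flip: of_nat_mult)
  then have "2 ^ n * (A * B) = (\<Prod>i\<in>I. 2 * i * (\<Prod>j\<in>I. f (2 * i + j) * f (2 * i - j)))"
    by (simp add: A_eq B_eq I_def prod.distrib prod_int_atLeastAtMost_eq_fact ac_simps)
  also have "[\<dots> = (\<Prod>i\<in>I. -1)] (mod int p)"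
  proof (intro cong_prod)
    fix i assume "i \<in> I"
    then have "\<not> int p dvd 2 * i" using p_eq by (auto simp: I_def zdvd_not_zless)
    then show "[2 * i * (\<Prod>j\<in>I. f (2 * i + j) * f (2 * i - j)) = -1] (mod int p)"
      unfolding f_def I_def by (rule prod_omit_multiple_centered_window_cong[OF assms(1) p_eq])
  qed
  finally have "[2 ^ n * (A * B) = (-1) ^ n] (mod int p)" by (simp add: I_def)
  then have "[(-1) ^ n * (2 ^ n * (A * B)) = (-1) ^ n * (-1) ^ n] (mod int p)"
    by (rule cong_scalar_left)
  moreover have "(-2 :: int) ^ n = (-1) ^ n * 2 ^ n" by (simp flip: power_mult_distrib)
  ultimately have "[(-2) ^ n * (A * B) = 1] (mod int p)"
    by (simp add: mult.assoc flip: power_add)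
  moreover have "\<not> int p dvd -2" using assms(2) by (auto dest: zdvd_imp_le)
  ultimately show ?thesis
    using Legendre_cong_if_power_mult_cong_1 assms(1,2) unfolding n_def by simp
qed

end
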